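(* Let $(\Omega,\mathcal A)$ be a measurable space, let $U\subset\mathbb C^n$ be an open set such that $\lambda z\in U$ whenever $z\in U$ and $\lambda\in\mathbb C$, $|\lambda|\le1$, and let $f(\omega,z)$ be a random holomorphic function in $U$. Then there is a sequence $p_m(\omega,z)$, $m=0,1,\ldots$, of random polynomials such that, for every $\omega\in\Omega$, $p_m(\omega,\cdot)$ converges to $f(\omega,\cdot)$ uniformly on every compact subset of $U$.
   Context: A random holomorphic function on an open set $U\subset\mathbb C^n$ is a function $f:\Omega\times U\to\mathbb C$ such that $f(\omega,\cdot)$ is holomorphic for each $\omega$ and $f(\cdot,z)$ is measurable for each $z\in U$. A random polynomial is a function $p(\omega,z)$ such that $p(\omega,\cdot)$ is a polynomial for each $\omega$ and $p(\cdot,z)$ is measurable for each $z$. *)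

theory Defs
  imports "HOL-Analysis.Analysis"
begin

definition holo_on :: "(complex ^ 'n \<Rightarrow> complex) \<Rightarrow> (complex ^ 'n) set \<Rightarrow> bool" where
  "holo_on f U \<longleftrightarrow> (\<forall>z\<in>U. \<exists>L. (f has_derivative L) (at z) \<and> (\<forall>c v. L (c *s v) = c * L v))"

definition poly_fun :: "(complex ^ 'n \<Rightarrow> complex) \<Rightarrow> bool" where
  "poly_fun p \<longleftrightarrow> (\<exists>(A :: ('n \<Rightarrow> nat) set) (c :: ('n \<Rightarrow> nat) \<Rightarrow> complex). finite A \<and>
      (\<forall>z. p z = (\<Sum>\<alpha>\<in>A. c \<alpha> * (\<Prod>i\<in>UNIV. (z $ i) ^ (\<alpha> i)))))"

definition random_holomorphic :: "'a measure \<Rightarrow> (complex ^ 'n) set \<Rightarrow> ('a \<Rightarrow> complex ^ 'n \<Rightarrow> complex) \<Rightarrow> bool" where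
  "random_holomorphic M U f \<longleftrightarrow>
     (\<forall>\<omega>\<in>space M. holo_on (f \<omega>) U) \<and> (\<forall>z\<in>U. (\<lambda>\<omega>. f \<omega> z) \<in> borel_measurable M)"

definition random_polynomial :: "'a measure \<Rightarrow> ('a \<Rightarrow> complex ^ 'n \<Rightarrow> complex) \<Rightarrow> bool" where
  "random_polynomial M p \<longleftrightarrow>
     (\<forall>\<omega>\<in>space M. poly_fun (p \<omega>)) \<and> (\<forall>z. (\<lambda>\<omega>. p \<omega> z) \<in> borel_measurable M)"

end

(*
  The approximants are the partial sums of the expansion f = \<Sum>\<^sub>k P\<^sub>k of f(\<omega>, \<cdot>) into
  homogeneous components, P\<^sub>k(z) being the k-th Taylor coefficient at 0 of the one-variable
  function t \<mapsto> f(\<omega>, t z). Since U is open and balanced, t \<mapsto> f(\<omega>, t z) is holomorphic on a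
  disc of radius r > 1 uniformly for z in a compact K \<subseteq> U, and Cauchy's estimate
  |P\<^sub>k| \<le> B r\<^sup>-\<^sup>k gives uniform convergence on K.

  Each P\<^sub>k is k-homogeneous and, as a contour integral of f, holomorphic along every complex
  line (Morera). On a line parallel to a coordinate axis homogeneity gives |P\<^sub>k| = O(|s|\<^sup>k),
  so by Liouville P\<^sub>k is a polynomial of degree \<le> k in each variable separately; Lagrange
  interpolation in one variable after another then writes it as an honest polynomial.
  Finally P\<^sub>k(z) is measurable in \<omega> because complex derivatives are pointwise limits of
  difference quotients.
*)

theory Submission
  imports Defs "HOL-Complex_Analysis.Cauchy_Integral_Formula" "HOL-Computational_Algebra.Polynomial"
begin

lemma norm_vector_scalar_mult: "norm (c *s x) = norm c * norm (x :: 'a::real_normed_field ^ 'n)"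
  unfolding norm_vec_def vector_scalar_mult_def by (simp add: norm_mult L2_set_right_distrib)

lemma norm_vector_scalar_mult_le:
  "norm c \<le> 1 \<Longrightarrow> norm (c *s x) \<le> norm (x :: 'a::real_normed_field ^ 'n)"
  by (simp add: norm_vector_scalar_mult mult_left_le_one_le)

lemma bounded_linear_vector_scalar_mult_left: "bounded_linear (\<lambda>t::'a::real_normed_field. t *s b)"
proof (rule bounded_linear_intro[where K = "norm b"])
  show "(x + y) *s b = x *s b + y *s b" for x y :: 'a
    by (rule vector_sadd_rdistrib)
  show "(r *\<^sub>R x) *s b = r *\<^sub>R (x *s b)" for r x
    by (simp add: vec_eq_iff)
  show "norm (x *s b) \<le> norm x * norm b" for x
    by (simp add: norm_vector_scalar_mult)
qed

lemma continuous_on_vector_scalar_mult [continuous_intros]: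
  fixes f :: "_ \<Rightarrow> 'a::real_normed_field"
  assumes "continuous_on S f" "continuous_on S g"
  shows "continuous_on S (\<lambda>x. f x *s g x)"
  unfolding vector_scalar_mult_def
  by (intro continuous_intros assms continuous_on_vec_lambda)

definition vec_monomial :: "('n::finite \<Rightarrow> nat) \<Rightarrow> complex ^ 'n \<Rightarrow> complex" where
  "vec_monomial \<alpha> z = (\<Prod>i\<in>UNIV. (z $ i) ^ \<alpha> i)"

lemma vec_monomial_add: "vec_monomial (\<lambda>i. \<alpha> i + \<beta> i) z = vec_monomial \<alpha> z * vec_monomial \<beta> z"
  by (simp add: vec_monomial_def power_add prod.distrib)

lemma poly_funE:
  assumes "poly_fun p"
  obtains A c where "finite A" "\<And>z. p z = (\<Sum>\<alpha>\<in>A. c \<alpha> * vec_monomial \<alpha> z)"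
  using assms unfolding poly_fun_def vec_monomial_def by blast

lemma poly_fun_sum_monomials:
  fixes \<beta> :: "'x \<Rightarrow> 'n::finite \<Rightarrow> nat"
  assumes "finite X"
  shows "poly_fun (\<lambda>z. \<Sum>x\<in>X. d x * vec_monomial (\<beta> x) z)"
  unfolding poly_fun_def
proof (intro exI conjI allI)
  show "finite (\<beta> ` X)"
    using assms by simp
  fix z :: "complex ^ 'n"
  have "(\<Sum>x\<in>X. d x * vec_monomial (\<beta> x) z) =
        (\<Sum>\<alpha>\<in>\<beta> ` X. \<Sum>x\<in>{x. x \<in> X \<and> \<beta> x = \<alpha>}. d x * vec_monomial (\<beta> x) z)"
    by (rule sum.group[symmetric]) (use assms in auto)
  also have "\<dots> = (\<Sum>\<alpha>\<in>\<beta> ` X. (\<Sum>x\<in>{x. x \<in> X \<and> \<beta> x = \<alpha>}. d x) * vec_monomial \<alpha> z)"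
    by (intro sum.cong refl) (auto simp: sum_distrib_right)
  finally show "(\<Sum>x\<in>X. d x * vec_monomial (\<beta> x) z) =
      (\<Sum>\<alpha>\<in>\<beta> ` X. (\<Sum>x\<in>{x. x \<in> X \<and> \<beta> x = \<alpha>}. d x) * (\<Prod>i\<in>UNIV. z $ i ^ \<alpha> i))"
    by (simp add: vec_monomial_def)
qed

lemma poly_fun_const: "poly_fun (\<lambda>z. c)"
  using poly_fun_sum_monomials[of "{()}" "\<lambda>_. c" "\<lambda>_ _. 0"] by (simp add: vec_monomial_def)

lemma poly_fun_component: "poly_fun (\<lambda>z::complex ^ 'n::finite. z $ i)"
proof -
  have "vec_monomial (\<lambda>j. if j = i then 1 else 0) z = z $ i" for z :: "complex ^ 'n"
    unfolding vec_monomial_def by (simp add: if_distrib cong: if_cong)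
  then show ?thesis
    using poly_fun_sum_monomials[of "{()}" "\<lambda>_. 1" "\<lambda>_ j. if j = i then 1 else 0"] by simp
qed

lemma poly_fun_add:
  assumes "poly_fun p" "poly_fun q"
  shows "poly_fun (\<lambda>z. p z + q z)"
proof -
  obtain A c where A: "finite A" "\<And>z. p z = (\<Sum>\<alpha>\<in>A. c \<alpha> * vec_monomial \<alpha> z)"
    using poly_funE[OF assms(1)] by blast
  obtain B d where B: "finite B" "\<And>z. q z = (\<Sum>\<alpha>\<in>B. d \<alpha> * vec_monomial \<alpha> z)"
    using poly_funE[OF assms(2)] by blast
  have "poly_fun (\<lambda>z. \<Sum>x\<in>A <+> B. case_sum c d x * vec_monomial (case_sum id id x) z)"
    using A B by (intro poly_fun_sum_monomials) simp
  then show ?thesis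
    by (simp add: A B sum.Plus o_def)
qed

lemma poly_fun_mult:
  assumes "poly_fun p" "poly_fun q"
  shows "poly_fun (\<lambda>z. p z * q z)"
proof -
  obtain A c where A: "finite A" "\<And>z. p z = (\<Sum>\<alpha>\<in>A. c \<alpha> * vec_monomial \<alpha> z)"
    using poly_funE[OF assms(1)] by blast
  obtain B d where B: "finite B" "\<And>z. q z = (\<Sum>\<alpha>\<in>B. d \<alpha> * vec_monomial \<alpha> z)"
    using poly_funE[OF assms(2)] by blast
  have "poly_fun (\<lambda>z. \<Sum>(\<alpha>, \<beta>)\<in>A \<times> B. (c \<alpha> * d \<beta>) * vec_monomial (\<lambda>i. \<alpha> i + \<beta> i) z)"
    using poly_fun_sum_monomials[of "A \<times> B" "\<lambda>x. c (fst x) * d (snd x)" "\<lambda>x i. fst x i + snd x i"]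
      A B
    by (simp add: case_prod_unfold)
  moreover have "(\<Sum>(\<alpha>, \<beta>)\<in>A \<times> B. (c \<alpha> * d \<beta>) * vec_monomial (\<lambda>i. \<alpha> i + \<beta> i) z) = p z * q z" for z
    unfolding A B sum_product vec_monomial_add
    by (simp add: sum.cartesian_product algebra_simps)
  ultimately show ?thesis
    by simp
qed

lemma poly_fun_sum:
  "finite S \<Longrightarrow> (\<And>x. x \<in> S \<Longrightarrow> poly_fun (p x)) \<Longrightarrow> poly_fun (\<lambda>z. \<Sum>x\<in>S. p x z)"
  by (induction S rule: finite_induct) (auto intro: poly_fun_const poly_fun_add)

lemma poly_fun_prod:
  "finite S \<Longrightarrow> (\<And>x. x \<in> S \<Longrightarrow> poly_fun (p x)) \<Longrightarrow> poly_fun (\<lambda>z. \<Prod>x\<in>S. p x z)"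
  by (induction S rule: finite_induct) (auto intro: poly_fun_const poly_fun_mult)

lemma poly_fun_diff:
  assumes "poly_fun p" "poly_fun q"
  shows "poly_fun (\<lambda>z. p z - q z)"
  using poly_fun_add[OF assms(1) poly_fun_mult[OF poly_fun_const assms(2)], of "-1"] by simp

lemma poly_fun_divide_const:
  assumes "poly_fun p"
  shows "poly_fun (\<lambda>z. p z / c)"
  using poly_fun_mult[OF assms poly_fun_const, of "1 / c"] by simp

section \<open>Functions polynomial in each variable separately\<close>

definition lagrange_basis :: "nat \<Rightarrow> nat \<Rightarrow> 'a::field_char_0 \<Rightarrow> 'a" where
  "lagrange_basis k m s = (\<Prod>l\<in>{..k} - {m}. (s - of_nat l) / (of_nat m - of_nat l))"

lemma lagrange_basis_node:
  assumes "m \<le> k" "m' \<le> k"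
  shows "lagrange_basis k m (of_nat m' :: 'a::field_char_0) = (if m = m' then 1 else 0)"
proof (cases "m = m'")
  case True
  then show ?thesis
    by (simp add: lagrange_basis_def)
next
  case False
  with assms have "m' \<in> {..k} - {m}"
    by auto
  with False show ?thesis
    unfolding lagrange_basis_def by (subst prod_zero) auto
qed

lemma lagrange_interpolation:
  fixes f :: "'a::field_char_0 \<Rightarrow> 'a"
  assumes f: "\<And>s. f s = (\<Sum>j\<le>k. \<beta> j * s ^ j)"
  shows "f s = (\<Sum>m\<le>k. lagrange_basis k m s * f (of_nat m))"
proof -
  define P where "P = (\<Sum>j\<le>k. monom (\<beta> j) j)"
  define Q where "Q = (\<Sum>m\<le>k. smult (f (of_nat m) / (\<Prod>l\<in>{..k} - {m}. of_nat m - of_nat l))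
                          (\<Prod>l\<in>{..k} - {m}. [:- of_nat l, 1:]))"
  have poly_P: "poly P x = f x" for x
    by (simp add: P_def poly_sum poly_monom f)
  have poly_Q: "poly Q x = (\<Sum>m\<le>k. lagrange_basis k m x * f (of_nat m))" for x
    by (simp add: Q_def poly_sum poly_prod lagrange_basis_def prod_dividef mult.commute)
  have "degree P \<le> k"
    unfolding P_def by (rule degree_sum_le) (auto intro: order_trans[OF degree_monom_le])
  moreover have "degree (\<Prod>l\<in>{..k} - {m}. [:- of_nat l, 1 :: 'a:]) \<le> k" if "m \<le> k" for m
    using that by (subst degree_prod_sum_eq) auto
  then have "degree Q \<le> k"
    unfolding Q_def by (intro degree_sum_le) (auto intro: order_trans[OF degree_smult_le])
  moreover have "card (of_nat ` {..k} :: 'a set) = Suc k"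
    by (subst card_image) (auto simp: inj_on_def)
  moreover have "poly P x = poly Q x" if "x \<in> of_nat ` {..k}" for x
  proof -
    from that obtain m' where m': "m' \<le> k" "x = of_nat m'"
      by auto
    then have "(\<Sum>m\<le>k. lagrange_basis k m x * f (of_nat m)) = (\<Sum>m\<le>k. if m = m' then f x else 0)"
      by (intro sum.cong refl) (auto simp: lagrange_basis_node)
    with m' show ?thesis
      by (simp add: poly_P poly_Q)
  qed
  ultimately have "P = Q"
    by (intro poly_eqI_degree[where A = "of_nat ` {..k}"]) auto
  then show ?thesis
    using poly_P[of s] poly_Q[of s] by simp
qed

definition vec_upd :: "'a ^ 'n \<Rightarrow> 'n \<Rightarrow> 'a \<Rightarrow> 'a ^ 'n" where
  "vec_upd z i s = (\<chi> j. if j = i then s else z $ j)"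

definition vec_upd_nodes :: "'a::semiring_1 ^ 'n \<Rightarrow> 'n set \<Rightarrow> ('n \<Rightarrow> nat) \<Rightarrow> 'a ^ 'n" where
  "vec_upd_nodes z S \<alpha> = (\<chi> j. if j \<in> S then of_nat (\<alpha> j) else z $ j)"

definition polynomial_in_each_variable :: "nat \<Rightarrow> ('a::comm_ring_1 ^ 'n \<Rightarrow> 'a) \<Rightarrow> bool" where
  "polynomial_in_each_variable k c \<longleftrightarrow>
     (\<forall>z i. \<exists>\<beta>. \<forall>s. c (vec_upd z i s) = (\<Sum>j\<le>k. \<beta> j * s ^ j))"

lemma lagrange_interpolation_in_variable:
  assumes "polynomial_in_each_variable k c" "a \<notin> S"
  shows "c (vec_upd_nodes z S \<alpha>) =
    (\<Sum>m\<le>k. lagrange_basis k m (z $ a) * c (vec_upd_nodes z (insert a S) (\<alpha>(a := m))))"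
proof -
  obtain \<beta> where \<beta>: "\<And>s. c (vec_upd (vec_upd_nodes z S \<alpha>) a s) = (\<Sum>j\<le>k. \<beta> j * s ^ j)"
    using assms(1) unfolding polynomial_in_each_variable_def by blast
  have "vec_upd (vec_upd_nodes z S \<alpha>) a (z $ a) = vec_upd_nodes z S \<alpha>"
    using assms(2) by (simp add: vec_upd_def vec_upd_nodes_def vec_eq_iff)
  moreover have "vec_upd (vec_upd_nodes z S \<alpha>) a (of_nat m) =
      vec_upd_nodes z (insert a S) (\<alpha>(a := m))" for m
    using assms(2) by (auto simp: vec_upd_def vec_upd_nodes_def vec_eq_iff)
  ultimately show ?thesis
    using lagrange_interpolation[OF \<beta>, of "z $ a"] by simp
qed

lemma polynomial_in_each_variable_lagrange_expansion:
  fixes c :: "'a::field_char_0 ^ 'n \<Rightarrow> 'a"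
  assumes "polynomial_in_each_variable k c" "finite S"
  shows "c z = (\<Sum>\<alpha>\<in>PiE S (\<lambda>_. {..k}).
                  (\<Prod>i\<in>S. lagrange_basis k (\<alpha> i) (z $ i)) * c (vec_upd_nodes z S \<alpha>))"
  using assms(2)
proof (induction S rule: finite_induct)
  case empty
  then show ?case
    by (simp add: vec_upd_nodes_def)
next
  case (insert a S)
  let ?L = "\<lambda>S \<alpha>. \<Prod>i\<in>S. lagrange_basis k (\<alpha> i) (z $ i)"
  have L_upd: "?L (insert a S) (\<alpha>(a := m)) = lagrange_basis k m (z $ a) * ?L S \<alpha>" for \<alpha> m
  proof -
    have "?L S (\<alpha>(a := m)) = ?L S \<alpha>"
      using insert.hyps by (intro prod.cong) auto
    then show ?thesis
      using insert.hyps by simp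
  qed
  let ?c = "\<lambda>\<alpha>. c (vec_upd_nodes z (insert a S) \<alpha>)"
  have "c z = (\<Sum>\<alpha>\<in>PiE S (\<lambda>_. {..k}). \<Sum>m\<le>k. ?L (insert a S) (\<alpha>(a := m)) * ?c (\<alpha>(a := m)))"
    unfolding insert.IH L_upd
    by (simp add: lagrange_interpolation_in_variable[OF assms(1) insert.hyps(2)]
        sum_distrib_left mult_ac)
  also have "\<dots> = (\<Sum>(m, \<alpha>)\<in>{..k} \<times> PiE S (\<lambda>_. {..k}). ?L (insert a S) (\<alpha>(a := m)) * ?c (\<alpha>(a := m)))"
    by (subst sum.swap) (rule sum.cartesian_product)
  also have "\<dots> = (\<Sum>\<alpha>\<in>PiE (insert a S) (\<lambda>_. {..k}). ?L (insert a S) \<alpha> * ?c \<alpha>)"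
    unfolding PiE_insert_eq using inj_combinator[OF insert.hyps(2)]
    by (subst sum.reindex) (auto simp: case_prod_unfold)
  finally show ?case .
qed

lemma poly_fun_lagrange_basis_component: "poly_fun (\<lambda>z. lagrange_basis k m (z $ i))"
  unfolding lagrange_basis_def
  by (intro poly_fun_prod poly_fun_divide_const poly_fun_diff poly_fun_component poly_fun_const)
    simp

lemma polynomial_in_each_variable_imp_poly_fun:
  fixes c :: "complex ^ 'n::finite \<Rightarrow> complex"
  assumes "polynomial_in_each_variable k c"
  shows "poly_fun c"
proof -
  have nodes: "vec_upd_nodes z UNIV \<alpha> = vec_upd_nodes 0 UNIV \<alpha>" for z :: "complex ^ 'n" and \<alpha>
    by (simp add: vec_upd_nodes_def)
  have expansion: "c = (\<lambda>z. \<Sum>\<alpha>\<in>PiE UNIV (\<lambda>_. {..k}).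
      (\<Prod>i\<in>UNIV. lagrange_basis k (\<alpha> i) (z $ i)) * c (vec_upd_nodes 0 UNIV \<alpha>))"
  proof
    fix z
    show "c z = (\<Sum>\<alpha>\<in>PiE UNIV (\<lambda>_. {..k}).
        (\<Prod>i\<in>UNIV. lagrange_basis k (\<alpha> i) (z $ i)) * c (vec_upd_nodes 0 UNIV \<alpha>))"
      using polynomial_in_each_variable_lagrange_expansion[OF assms finite_class.finite_UNIV, of z]
      unfolding nodes[of z] .
  qed
  have poly: "poly_fun (\<lambda>z. \<Sum>\<alpha>\<in>PiE UNIV (\<lambda>_. {..k}).
      (\<Prod>i\<in>UNIV. lagrange_basis k (\<alpha> i) (z $ i)) * c (vec_upd_nodes 0 UNIV \<alpha>))"
    using poly_fun_lagrange_basis_component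
    by (intro poly_fun_sum poly_fun_mult poly_fun_prod poly_fun_const) (simp_all add: finite_PiE)
  then show ?thesis
    by (subst expansion)
qed

lemma holomorphic_on_line:
  assumes "holo_on g U"
  shows "(\<lambda>t. g (a + t *s b)) holomorphic_on {t. a + t *s b \<in> U}"
  unfolding holomorphic_on_def
proof
  fix x assume "x \<in> {t. a + t *s b \<in> U}"
  then obtain L where L: "(g has_derivative L) (at (a + x *s b))" "\<And>c v. L (c *s v) = c * L v"
    using assms unfolding holo_on_def by blast
  have "((\<lambda>t. a + t *s b) has_derivative (\<lambda>t. t *s b)) (at x)"
    using has_derivative_add[OF has_derivative_const[of a] bounded_linear.has_derivative[OF
          bounded_linear_vector_scalar_mult_left has_derivative_ident]]
    by simp
  from diff_chain_at[OF this L(1)]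
  have "((\<lambda>t. g (a + t *s b)) has_derivative L \<circ> (\<lambda>t. t *s b)) (at x)"
    by (simp add: o_def)
  moreover have "L \<circ> (\<lambda>t. t *s b) = (*) (L b)"
    by (simp add: fun_eq_iff L(2) mult.commute)
  ultimately have "((\<lambda>t. g (a + t *s b)) has_field_derivative L b) (at x)"
    unfolding has_field_derivative_def by (simp add: o_def)
  then show "(\<lambda>t. g (a + t *s b)) field_differentiable at x within {t. a + t *s b \<in> U}"
    by (auto simp: field_differentiable_def intro: has_field_derivative_at_within)
qed

lemma holomorphic_on_ray:
  assumes "holo_on g U"
  shows "(\<lambda>t. g (t *s b)) holomorphic_on {t. t *s b \<in> U}"
  using holomorphic_on_line[OF assms, of 0 b] by simp

lemma holomorphic_on_scaled_line:
  assumes "holo_on g U"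
  shows "(\<lambda>s. g (t *s (a + s *s b))) holomorphic_on {s. t *s (a + s *s b) \<in> U}"
proof -
  have line: "t *s (a + s *s b) = t *s a + s *s (t *s b)" for s
    by (simp add: mult.commute)
  show ?thesis
    unfolding line by (rule holomorphic_on_line[OF assms])
qed

lemma holo_on_imp_continuous_on:
  assumes "holo_on g U"
  shows "continuous_on U g"
  using assms unfolding holo_on_def
  by (meson continuous_at_imp_continuous_on has_derivative_continuous)

lemma open_line_preimage:
  fixes a b :: "'a::real_normed_field ^ 'n"
  assumes "open U"
  shows "open {t. a + t *s b \<in> U}"
proof -
  have "continuous_on UNIV (\<lambda>t. a + t *s b)"
    by (intro continuous_intros)
  from open_vimage[OF assms this] show ?thesis
    by (simp add: vimage_def)
qed

lemma open_ray_preimage: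
  fixes b :: "'a::real_normed_field ^ 'n"
  assumes "open U"
  shows "open {t. t *s b \<in> U}"
  using open_line_preimage[OF assms, of 0 b] by simp

section \<open>Contour integrals depending holomorphically on a parameter\<close>

lemma continuous_on_contour_integral_param:
  assumes cont: "continuous_on (S \<times> path_image \<gamma>) (\<lambda>(s, t). F s t)"
    and "valid_path \<gamma>" and dcont: "continuous_on {0..1} (\<lambda>x. vector_derivative \<gamma> (at x))"
  shows "continuous_on S (\<lambda>s. contour_integral \<gamma> (F s))"
proof -
  have \<gamma>: "continuous_on {0..1} \<gamma>"
    using \<open>valid_path \<gamma>\<close> valid_path_imp_path path_def by blast
  have pair: "continuous_on (S \<times> {0..1}) (\<lambda>p. (fst p, \<gamma> (snd p)))"
    by (intro continuous_intros continuous_on_compose2[OF \<gamma>]) auto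
  have "(\<lambda>p. (fst p, \<gamma> (snd p))) ` (S \<times> {0..1}) \<subseteq> S \<times> path_image \<gamma>"
    by (auto simp: path_image_def)
  from continuous_on_compose2[OF cont pair this]
  have F: "continuous_on (S \<times> {0..1}) (\<lambda>p. F (fst p) (\<gamma> (snd p)))"
    by (simp add: case_prod_unfold)
  have D: "continuous_on (S \<times> {0..1}) (\<lambda>p. vector_derivative \<gamma> (at (snd p)))"
    by (intro continuous_on_compose2[OF dcont] continuous_intros) auto
  have "continuous_on S (\<lambda>s. integral (cbox 0 1) (\<lambda>x. F s (\<gamma> x) * vector_derivative \<gamma> (at x)))"
    by (rule integral_continuous_on_param)
       (use continuous_on_mult[OF F D] in \<open>simp add: case_prod_unfold cbox_interval\<close>)
  then show ?thesis
    by (simp add: contour_integral_integral cbox_interval)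
qed

lemma continuous_on_vector_derivative_circlepath:
  "continuous_on {0..1} (\<lambda>x. vector_derivative (circlepath w r) (at x))"
  unfolding vector_derivative_circlepath by (intro continuous_intros)

lemma contour_integral_swap_linepath_circlepath:
  assumes cont: "continuous_on (closed_segment p q \<times> path_image (circlepath w r)) (\<lambda>(s, t). F s t)"
  shows "contour_integral (linepath p q) (\<lambda>s. contour_integral (circlepath w r) (F s)) =
      contour_integral (circlepath w r) (\<lambda>t. contour_integral (linepath p q) (\<lambda>s. F s t))"
    and "(\<lambda>t. contour_integral (linepath p q) (\<lambda>s. F s t)) contour_integrable_on circlepath w r"
proof -
  show "contour_integral (linepath p q) (\<lambda>s. contour_integral (circlepath w r) (F s)) =
      contour_integral (circlepath w r) (\<lambda>t. contour_integral (linepath p q) (\<lambda>s. F s t))"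
    using cont
    by (intro contour_integral_swap) (simp_all add: continuous_on_vector_derivative_circlepath)
  have "continuous_on (path_image (circlepath w r) \<times> path_image (linepath p q)) (\<lambda>(t, s). F s t)"
    using continuous_on_swap_args[OF cont] by simp
  then have "continuous_on (path_image (circlepath w r))
      (\<lambda>t. contour_integral (linepath p q) (\<lambda>s. F s t))"
    by (rule continuous_on_contour_integral_param) simp_all
  then show "(\<lambda>t. contour_integral (linepath p q) (\<lambda>s. F s t)) contour_integrable_on circlepath w r"
    by (rule contour_integrable_continuous_circlepath)
qed

text \<open>Morera's theorem, with Fubini exchanging the contour integral over each triangle
  with the one over the circle.\<close>

lemma holomorphic_on_contour_integral_param:
  fixes F :: "complex \<Rightarrow> complex \<Rightarrow> complex"
  assumes "open S"
    and cont: "continuous_on (S \<times> path_image (circlepath w r)) (\<lambda>(s, t). F s t)"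
    and hol: "\<And>t. t \<in> path_image (circlepath w r) \<Longrightarrow> (\<lambda>s. F s t) holomorphic_on S"
  shows "(\<lambda>s. contour_integral (circlepath w r) (F s)) holomorphic_on S"
proof -
  let ?\<gamma> = "circlepath w r"
  define \<Phi> where "\<Phi> = (\<lambda>s. contour_integral ?\<gamma> (F s))"
  define I where "I p q t = contour_integral (linepath p q) (\<lambda>s. F s t)" for p q t
  have "continuous_on (closed_segment p q \<times> path_image ?\<gamma>) (\<lambda>(s, t). F s t)"
    if "closed_segment p q \<subseteq> S" for p q
    by (rule continuous_on_subset[OF cont]) (use that in auto)
  note swap = contour_integral_swap_linepath_circlepath(1)[OF this, folded I_def \<Phi>_def]
    and integrable = contour_integral_swap_linepath_circlepath(2)[OF this, folded I_def]
  have "\<Phi> analytic_on S"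
  proof (rule Morera_triangle[OF _ \<open>open S\<close>])
    show "continuous_on S \<Phi>"
      unfolding \<Phi>_def
      by (intro continuous_on_contour_integral_param[OF cont])
         (simp_all add: continuous_on_vector_derivative_circlepath)
  next
    fix a b c
    show "convex hull {a, b, c} \<subseteq> S \<longrightarrow>
      contour_integral (linepath a b) \<Phi> + contour_integral (linepath b c) \<Phi> +
      contour_integral (linepath c a) \<Phi> = 0"
    proof
      assume hull: "convex hull {a, b, c} \<subseteq> S"
      have segs: "closed_segment a b \<subseteq> S" "closed_segment b c \<subseteq> S" "closed_segment c a \<subseteq> S"
        by (rule subset_trans[OF segments_subset_convex_hull(1) hull]
                 subset_trans[OF segments_subset_convex_hull(3) hull]
                 subset_trans[OF segments_subset_convex_hull(5) hull])+
      have "I a b t + I b c t + I c a t = 0" if "t \<in> path_image ?\<gamma>" for t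
      proof -
        have "(\<lambda>s. F s t) holomorphic_on convex hull {a, b, c}"
          using hol[OF that] hull by (rule holomorphic_on_subset)
        then show ?thesis
          unfolding I_def by (intro has_chain_integral_chain_integral3 Cauchy_theorem_triangle)
      qed
      then have "contour_integral ?\<gamma> (\<lambda>t. I a b t + I b c t + I c a t) = 0"
        by (rule contour_integral_eq_0)
      moreover have "contour_integral ?\<gamma> (\<lambda>t. I a b t + I b c t + I c a t) =
          contour_integral ?\<gamma> (I a b) + contour_integral ?\<gamma> (I b c) + contour_integral ?\<gamma> (I c a)"
        using integrable[OF segs(1)] integrable[OF segs(2)] integrable[OF segs(3)]
        by (simp add: contour_integral_add contour_integrable_add)
      ultimately show "contour_integral (linepath a b) \<Phi> +
          contour_integral (linepath b c) \<Phi> + contour_integral (linepath c a) \<Phi> = 0"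
        by (simp only: swap[OF segs(1)] swap[OF segs(2)] swap[OF segs(3)])
    qed
  qed
  then show ?thesis
    unfolding \<Phi>_def by (rule analytic_imp_holomorphic)
qed

section \<open>Homogeneous components\<close>

text \<open>Only the germ of \<open>g\<close> at \<open>0\<close> enters, so this makes sense for every \<open>z\<close> as soon as
  \<open>0 \<in> U\<close>; the values off \<open>U\<close> matter because a random polynomial must be measurable at
  every point.\<close>

definition homogeneous_component :: "(complex ^ 'n \<Rightarrow> complex) \<Rightarrow> nat \<Rightarrow> complex ^ 'n \<Rightarrow> complex" where
  "homogeneous_component g k z = (deriv ^^ k) (\<lambda>t. g (t *s z)) 0 / fact k"

lemma homogeneous_component_scale:
  assumes "holo_on g U" "open U" "0 \<in> U"
  shows "homogeneous_component g k (c *s z) = c ^ k * homogeneous_component g k z"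
proof -
  have "(deriv ^^ k) (\<lambda>t. g ((c * t) *s z)) 0 = c ^ k * (deriv ^^ k) (\<lambda>t. g (t *s z)) (c * 0)"
  proof (rule higher_deriv_compose_linear[where S = "{t. t *s (c *s z) \<in> U}"
        and T = "{t. t *s z \<in> U}"])
    show "(\<lambda>t. g (t *s z)) holomorphic_on {t. t *s z \<in> U}"
      using assms(1) by (rule holomorphic_on_ray)
    show "open {t. t *s (c *s z) \<in> U}" "open {t. t *s z \<in> U}"
      using assms(2) by (rule open_ray_preimage)+
    show "0 \<in> {t. t *s (c *s z) \<in> U}"
      using assms(3) by simp
    show "c * t \<in> {t. t *s z \<in> U}" if "t \<in> {t. t *s (c *s z) \<in> U}" for t
      using that by (simp add: vector_smult_assoc mult.commute)
  qed
  then show ?thesis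
    by (simp add: homogeneous_component_def vector_smult_assoc mult.commute)
qed

lemma holomorphic_on_ray_cball:
  assumes "holo_on g U" "\<And>t. norm t \<le> r \<Longrightarrow> t *s z \<in> U"
  shows "(\<lambda>t. g (t *s z)) holomorphic_on cball 0 r"
  using holomorphic_on_ray[OF assms(1)] by (rule holomorphic_on_subset) (use assms(2) in auto)

lemma homogeneous_component_eq_contour_integral:
  assumes "holo_on g U" "0 < r" "\<And>t. norm t \<le> r \<Longrightarrow> t *s z \<in> U"
  shows "homogeneous_component g k z =
    contour_integral (circlepath 0 r) (\<lambda>t. g (t *s z) / t ^ Suc k) / (2 * pi * \<i>)"
proof -
  have hol: "(\<lambda>t. g (t *s z)) holomorphic_on cball 0 r"
    using assms(1,3) by (rule holomorphic_on_ray_cball)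
  have "((\<lambda>t. g (t *s z) / (t - 0) ^ Suc k) has_contour_integral
           (2 * pi * \<i> / fact k * (deriv ^^ k) (\<lambda>t. g (t *s z)) 0)) (circlepath 0 r)"
    using hol assms(2)
    by (intro Cauchy_has_contour_integral_higher_derivative_circlepath
        holomorphic_on_imp_continuous_on) (auto elim: holomorphic_on_subset)
  then show ?thesis
    by (simp add: homogeneous_component_def contour_integral_unique)
qed

lemma norm_homogeneous_component_le:
  assumes "holo_on g U" "0 < r" "\<And>t. norm t \<le> r \<Longrightarrow> t *s z \<in> U"
    and "\<And>t. norm t = r \<Longrightarrow> norm (g (t *s z)) \<le> B"
  shows "norm (homogeneous_component g k z) \<le> B / r ^ k"
proof -
  have hol: "(\<lambda>t. g (t *s z)) holomorphic_on cball 0 r"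
    using assms(1,3) by (rule holomorphic_on_ray_cball)
  have "norm ((deriv ^^ k) (\<lambda>t. g (t *s z)) 0) \<le> fact k * B / r ^ k"
    using hol assms(2,4)
    by (intro Cauchy_inequality holomorphic_on_imp_continuous_on) (auto elim: holomorphic_on_subset)
  then show ?thesis
    by (simp add: homogeneous_component_def norm_divide divide_le_eq field_simps)
qed

lemma homogeneous_expansion_sums:
  assumes "holo_on g U" "1 < r" "\<And>t. norm t \<le> r \<Longrightarrow> t *s z \<in> U"
  shows "(\<lambda>k. homogeneous_component g k z) sums g z"
proof -
  have "(\<lambda>t. g (t *s z)) holomorphic_on ball 0 r"
    using holomorphic_on_ray_cball[OF assms(1,3)] by (rule holomorphic_on_subset) auto
  then have "(\<lambda>k. (deriv ^^ k) (\<lambda>t. g (t *s z)) 0 / fact k * (1 - 0) ^ k) sums g (1 *s z)"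
    using assms(2) by (intro holomorphic_power_series) simp_all
  then show ?thesis
    by (simp add: homogeneous_component_def)
qed

lemma holomorphic_on_homogeneous_component_line_ball:
  assumes hg: "holo_on g U" and ball: "ball 0 \<epsilon> \<subseteq> U"
  shows "(\<lambda>s. homogeneous_component g k (a + s *s b)) holomorphic_on {s. a + s *s b \<in> ball 0 \<epsilon>}"
proof -
  let ?S = "{s. a + s *s b \<in> ball 0 \<epsilon>}"
  define F where "F s t = g (t *s (a + s *s b)) / t ^ Suc k" for s t
  have in_ball: "t *s (a + s *s b) \<in> ball 0 \<epsilon>" if "s \<in> ?S" "norm t \<le> 1" for s t
    using norm_vector_scalar_mult_le[OF that(2), of "a + s *s b"] that(1) by simp
  have "(\<lambda>s. contour_integral (circlepath 0 1) (F s)) holomorphic_on ?S"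
  proof (rule holomorphic_on_contour_integral_param)
    show "open ?S"
      by (rule open_line_preimage) simp
    have "continuous_on (?S \<times> sphere 0 1) (\<lambda>p. g (snd p *s (a + fst p *s b)))"
      by (rule continuous_on_compose2[OF holo_on_imp_continuous_on[OF hg]])
         (use in_ball ball in \<open>auto intro!: continuous_intros\<close>)
    then show "continuous_on (?S \<times> path_image (circlepath 0 1)) (\<lambda>(s, t). F s t)"
      unfolding F_def case_prod_unfold by (auto intro!: continuous_intros)
  next
    fix t :: complex
    assume "t \<in> path_image (circlepath 0 1)"
    then have t: "norm t = 1"
      by simp
    have "?S \<subseteq> {s. t *s (a + s *s b) \<in> U}"
      using in_ball t ball by auto
    with holomorphic_on_scaled_line[OF hg] have "(\<lambda>s. g (t *s (a + s *s b))) holomorphic_on ?S"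
      by (rule holomorphic_on_subset)
    then show "(\<lambda>s. F s t) holomorphic_on ?S"
      unfolding F_def using t by (intro holomorphic_intros) auto
  qed
  then have "(\<lambda>s. contour_integral (circlepath 0 1) (F s) / (2 * pi * \<i>)) holomorphic_on ?S"
    using pi_gt_zero by (intro holomorphic_intros) auto
  moreover have "contour_integral (circlepath 0 1) (F s) / (2 * pi * \<i>) =
      homogeneous_component g k (a + s *s b)" if "s \<in> ?S" for s
    unfolding F_def using in_ball[OF that] ball
    by (subst homogeneous_component_eq_contour_integral[OF hg, where r = 1]) auto
  ultimately show ?thesis
    by (rule holomorphic_transform)
qed

lemma homogeneous_component_line_scale:
  assumes "holo_on g U" "open U" "0 \<in> U" "c \<noteq> 0"
  shows "homogeneous_component g k (a + s *s b) =
    (1 / c) ^ k * homogeneous_component g k (c *s a + s *s (c *s b))"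
proof -
  have "a + s *s b = (1 / c) *s (c *s a + s *s (c *s b))"
    using \<open>c \<noteq> 0\<close> by (simp add: vector_add_ldistrib vector_smult_assoc mult.commute)
  then show ?thesis
    using homogeneous_component_scale[OF assms(1-3)] by metis
qed

text \<open>Homogeneity spreads holomorphy from a small ball around \<open>0\<close> to the whole line.\<close>

lemma holomorphic_on_homogeneous_component_line:
  assumes hg: "holo_on g U" and U: "open U" "0 \<in> U"
  shows "(\<lambda>s. homogeneous_component g k (a + s *s b)) holomorphic_on UNIV"
proof -
  obtain \<epsilon> where "\<epsilon> > 0" and ball: "ball 0 \<epsilon> \<subseteq> U"
    using U openE by blast
  have "(\<lambda>s. homogeneous_component g k (a + s *s b)) field_differentiable at x" for x
  proof -
    define r where "r = \<epsilon> / (norm (a + x *s b) + 1)"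
    define c where "c = complex_of_real r"
    have "norm (a + x *s b) + 1 > 0"
      by (simp add: add_nonneg_pos)
    with \<open>\<epsilon> > 0\<close> have "r > 0"
      by (simp add: r_def)
    have "norm (c *s a + x *s (c *s b)) = norm (c *s (a + x *s b))"
      by (simp add: mult.commute)
    also have "\<dots> = r * norm (a + x *s b)"
      using \<open>r > 0\<close> by (simp only: norm_vector_scalar_mult c_def norm_of_real)
    also have "\<dots> < \<epsilon>"
      using \<open>\<epsilon> > 0\<close> \<open>norm (a + x *s b) + 1 > 0\<close> by (simp add: r_def field_simps)
    finally have "x \<in> {s. c *s a + s *s (c *s b) \<in> ball 0 \<epsilon>}"
      by simp
    moreover have "(\<lambda>s. homogeneous_component g k (c *s a + s *s (c *s b))) holomorphic_on
        {s. c *s a + s *s (c *s b) \<in> ball 0 \<epsilon>}"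
      by (rule holomorphic_on_homogeneous_component_line_ball[OF hg ball])
    ultimately have "(\<lambda>s. (1 / c) ^ k * homogeneous_component g k (c *s a + s *s (c *s b)))
        field_differentiable at x"
      by (intro holomorphic_on_imp_differentiable_at[OF _ open_line_preimage[OF open_ball]]
          holomorphic_intros)
    moreover have "c \<noteq> 0"
      using \<open>r > 0\<close> by (simp add: c_def)
    ultimately show ?thesis
      by (simp only: homogeneous_component_line_scale[OF hg U, where a = a and b = b])
  qed
  then show ?thesis
    by (simp add: holomorphic_on_def field_differentiable_at_within)
qed

lemma homogeneous_component_polynomial_in_each_variable:
  fixes g :: "complex ^ 'n::finite \<Rightarrow> complex"
  assumes hg: "holo_on g U" and U: "open U" "0 \<in> U"
  shows "polynomial_in_each_variable k (homogeneous_component g k)"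
  unfolding polynomial_in_each_variable_def
proof (intro allI)
  fix z :: "complex ^ 'n" and i
  define a where "a = vec_upd z i 0"
  define b :: "complex ^ 'n" where "b = axis i 1"
  define \<phi> where "\<phi> s = homogeneous_component g k (a + s *s b)" for s
  have "a + s *s b = vec_upd z i s" for s
    by (simp add: a_def b_def vec_upd_def axis_def vec_eq_iff)
  then have \<phi>: "\<phi> s = homogeneous_component g k (vec_upd z i s)" for s
    by (simp add: \<phi>_def)
  have "continuous_on (cball 0 1) (\<lambda>u. homogeneous_component g k (b + u *s a))"
    using holomorphic_on_homogeneous_component_line[OF hg U, of k b a]
    by (rule holomorphic_on_imp_continuous_on[OF holomorphic_on_subset[OF _ subset_UNIV]])
  then obtain B where B: "\<And>u. u \<in> cball 0 1 \<Longrightarrow> norm (homogeneous_component g k (b + u *s a)) \<le> B"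
    using continuous_on_compact_bound[OF compact_cball] by blast
  \<comment> \<open>The growth bound of Liouville's theorem comes from homogeneity.\<close>
  have bound: "norm (\<phi> s) \<le> B * norm s ^ k" if "1 \<le> norm s" for s
  proof -
    have "s \<noteq> 0"
      using that by auto
    then have "a + s *s b = s *s (b + (1 / s) *s a)"
      by (simp add: vector_add_ldistrib vector_smult_assoc add.commute)
    then have "\<phi> s = s ^ k * homogeneous_component g k (b + (1 / s) *s a)"
      unfolding \<phi>_def by (simp only: homogeneous_component_scale[OF hg U])
    moreover have "norm (homogeneous_component g k (b + (1 / s) *s a)) \<le> B"
      using that by (intro B) (simp add: norm_divide divide_le_eq_1)
    ultimately show ?thesis
      by (simp add: norm_mult norm_power mult.commute[of B] mult_left_mono)
  qed
  have "\<phi> holomorphic_on UNIV"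
    unfolding \<phi>_def by (rule holomorphic_on_homogeneous_component_line[OF hg U])
  from Liouville_polynomial[OF this bound]
  have "\<phi> s = (\<Sum>j\<le>k. (deriv ^^ j) \<phi> 0 / fact j * s ^ j)" for s .
  then show "\<exists>\<beta>. \<forall>s. homogeneous_component g k (vec_upd z i s) = (\<Sum>j\<le>k. \<beta> j * s ^ j)"
    unfolding \<phi>[symmetric] by (intro exI[of _ "\<lambda>j. (deriv ^^ j) \<phi> 0 / fact j"]) simp
qed

lemma poly_fun_homogeneous_component:
  assumes "holo_on g U" "open U" "0 \<in> U"
  shows "poly_fun (homogeneous_component g k)"
  using homogeneous_component_polynomial_in_each_variable[OF assms]
  by (rule polynomial_in_each_variable_imp_poly_fun)

section \<open>Convergence of the homogeneous expansion\<close>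

lemma norm_diff_divide_of_real_le:
  fixes t :: "'a::real_normed_field"
  assumes "1 \<le> r" "norm t \<le> r"
  shows "norm (t - t / of_real r) \<le> r - 1"
proof -
  have "t - t / of_real r = of_real (1 - 1 / r) * t"
    using assms(1) by (simp add: field_simps)
  moreover have "0 \<le> 1 - 1 / r"
    using assms(1) by simp
  ultimately have "norm (t - t / of_real r) = (1 - 1 / r) * norm t"
    by (simp only: norm_mult norm_of_real abs_of_nonneg)
  also have "\<dots> \<le> (1 - 1 / r) * r"
    using assms by (intro mult_left_mono) auto
  also have "\<dots> = r - 1"
    using assms(1) by (simp add: field_simps)
  finally show ?thesis .
qed

lemma balanced_compact_dilation:
  fixes U :: "('a::{real_normed_field, heine_borel} ^ 'n) set"
  assumes "open U" and bal: "\<And>z c. z \<in> U \<Longrightarrow> norm c \<le> 1 \<Longrightarrow> c *s z \<in> U"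
    and "compact K" "K \<subseteq> U"
  obtains r where "r > 1" "\<And>z t. z \<in> K \<Longrightarrow> norm t \<le> r \<Longrightarrow> t *s z \<in> U"
proof -
  define C where "C = (\<lambda>p. fst p *s snd p) ` (cball 0 1 \<times> K)"
  have "compact C"
    unfolding C_def using \<open>compact K\<close>
    by (intro compact_continuous_image compact_Times compact_cball continuous_intros)
  moreover have "C \<subseteq> U"
    unfolding C_def using \<open>K \<subseteq> U\<close> bal by auto
  ultimately obtain \<delta> where "\<delta> > 0" and \<delta>: "(\<Union>x\<in>C. ball x \<delta>) \<subseteq> U"
    using compact_subset_open_imp_ball_epsilon_subset \<open>open U\<close> by blast
  obtain R where "R \<ge> 0" and R: "\<And>z. z \<in> K \<Longrightarrow> norm z \<le> R"
    using continuous_on_compact_bound[OF \<open>compact K\<close> continuous_on_id] by blast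
  define r where "r = 1 + \<delta> / (R + 1)"
  show ?thesis
  proof
    show "r > 1"
      using \<open>\<delta> > 0\<close> \<open>R \<ge> 0\<close> by (simp add: r_def)
    fix z and t :: 'a
    assume z: "z \<in> K" and t: "norm t \<le> r"
    \<comment> \<open>Shrinking \<open>t\<close> by the factor \<open>r\<close> lands in \<open>C\<close> and moves \<open>t *s z\<close> by less than \<open>\<delta>\<close>.\<close>
    define u where "u = t / of_real r"
    have "norm u \<le> 1"
      using t \<open>r > 1\<close> by (simp add: u_def norm_divide)
    then have "u *s z \<in> C"
      unfolding C_def using z by force
    have "norm (t - u) \<le> r - 1"
      unfolding u_def using t \<open>r > 1\<close> by (intro norm_diff_divide_of_real_le) auto
    also have "\<dots> = \<delta> / (R + 1)"
      by (simp add: r_def)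
    finally have "norm (t - u) \<le> \<delta> / (R + 1)" .
    have "dist (u *s z) (t *s z) = norm (t - u) * norm z"
      by (simp add: dist_norm norm_minus_commute norm_vector_scalar_mult flip: vector_sub_rdistrib)
    also have "\<dots> \<le> \<delta> / (R + 1) * R"
      using \<open>norm (t - u) \<le> \<delta> / (R + 1)\<close> R[OF z] \<open>\<delta> > 0\<close> \<open>R \<ge> 0\<close> by (intro mult_mono) simp_all
    also have "\<dots> < \<delta>"
      using \<open>\<delta> > 0\<close> \<open>R \<ge> 0\<close> by (simp add: field_simps)
    finally have "t *s z \<in> ball (u *s z) \<delta>"
      by simp
    with \<delta> \<open>u *s z \<in> C\<close> show "t *s z \<in> U"
      by blast
  qed
qed

lemma uniform_limit_homogeneous_expansion:
  assumes hg: "holo_on g U" and "open U"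
    and bal: "\<And>z c. z \<in> U \<Longrightarrow> norm c \<le> 1 \<Longrightarrow> c *s z \<in> U"
    and K: "compact K" "K \<subseteq> U"
  shows "uniform_limit K (\<lambda>m z. \<Sum>k<m. homogeneous_component g k z) g sequentially"
proof -
  obtain r where "r > 1" and dil: "\<And>z t. z \<in> K \<Longrightarrow> norm t \<le> r \<Longrightarrow> t *s z \<in> U"
    using balanced_compact_dilation[OF \<open>open U\<close> bal K] by blast
  define C where "C = (\<lambda>p. fst p *s snd p) ` (cball 0 r \<times> K)"
  have "compact C"
    unfolding C_def using \<open>compact K\<close>
    by (intro compact_continuous_image compact_Times compact_cball continuous_intros)
  moreover have "C \<subseteq> U"
    unfolding C_def using dil by force
  ultimately obtain B where B: "\<And>x. x \<in> C \<Longrightarrow> norm (g x) \<le> B"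
    using continuous_on_compact_bound continuous_on_subset[OF holo_on_imp_continuous_on[OF hg]]
    by metis
  \<comment> \<open>Cauchy's estimate on the circle of radius \<open>r > 1\<close> gives a geometric majorant.\<close>
  have "norm (homogeneous_component g k z) \<le> B * (1 / r) ^ k" if "z \<in> K" for k z
  proof -
    have "norm (homogeneous_component g k z) \<le> B / r ^ k"
    proof (rule norm_homogeneous_component_le[OF hg])
      show "norm (g (t *s z)) \<le> B" if "norm t = r" for t
        using that \<open>z \<in> K\<close> by (intro B) (force simp: C_def)
    qed (use \<open>r > 1\<close> dil[OF that] in auto)
    then show ?thesis
      by (simp add: power_one_over)
  qed
  moreover have "summable (\<lambda>k. B * (1 / r) ^ k)"
    using \<open>r > 1\<close> by (intro summable_mult summable_geometric) auto
  ultimately have "uniform_limit K (\<lambda>m z. \<Sum>k<m. homogeneous_component g k z)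
      (\<lambda>z. \<Sum>k. homogeneous_component g k z) sequentially"
    by (rule Weierstrass_m_test)
  moreover have "(\<Sum>k. homogeneous_component g k z) = g z" if "z \<in> K" for z
    using homogeneous_expansion_sums[OF hg \<open>r > 1\<close> dil[OF that]] by (simp add: sums_iff)
  ultimately show ?thesis
    by (simp cong: uniform_limit_cong')
qed

section \<open>Measurability\<close>

lemma borel_measurable_deriv:
  fixes F :: "'a \<Rightarrow> complex \<Rightarrow> complex"
  assumes "open D" "t \<in> D"
    and hol: "\<And>\<omega>. \<omega> \<in> space M \<Longrightarrow> F \<omega> holomorphic_on D"
    and meas: "\<And>t. t \<in> D \<Longrightarrow> (\<lambda>\<omega>. F \<omega> t) \<in> borel_measurable M"
  shows "(\<lambda>\<omega>. deriv (F \<omega>) t) \<in> borel_measurable M"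
proof -
  obtain \<delta> where "\<delta> > 0" and \<delta>: "ball t \<delta> \<subseteq> D"
    using \<open>open D\<close> \<open>t \<in> D\<close> openE by blast
  define h where "h = (\<lambda>j. complex_of_real (\<delta> / (real j + 2)))"
  have "(\<lambda>j. \<delta> / (real j + 2)) \<longlonglongrightarrow> 0"
    using LIMSEQ_ignore_initial_segment[OF lim_const_over_n[of \<delta>], of 2] by (simp add: add.commute)
  from tendsto_of_real[OF this] have "h \<longlonglongrightarrow> 0"
    unfolding h_def of_real_0 .
  moreover have "h j \<noteq> 0" for j
    using \<open>\<delta> > 0\<close> unfolding h_def by (simp only: of_real_eq_0_iff divide_eq_0_iff) linarith
  ultimately have h: "filterlim h (at 0) sequentially"
    by (simp add: filterlim_at)
  have "norm (h j) < \<delta>" for j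
    unfolding h_def norm_of_real using \<open>\<delta> > 0\<close> by (simp add: field_simps add_pos_nonneg)
  then have "t + h j \<in> D" for j
    using \<delta> by (auto simp: dist_norm)
  then have "(\<lambda>\<omega>. (F \<omega> (t + h j) - F \<omega> t) / h j) \<in> borel_measurable M" for j
    using meas[of "t + h j"] meas[OF \<open>t \<in> D\<close>] by measurable
  moreover have "(\<lambda>j. (F \<omega> (t + h j) - F \<omega> t) / h j) \<longlonglongrightarrow> deriv (F \<omega>) t" if "\<omega> \<in> space M" for \<omega>
  proof -
    have "F \<omega> field_differentiable at t"
      using hol[OF that] \<open>open D\<close> \<open>t \<in> D\<close> by (rule holomorphic_on_imp_differentiable_at)
    then have "((\<lambda>x. (F \<omega> (t + x) - F \<omega> t) / x) \<longlongrightarrow> deriv (F \<omega>) t) (at 0)"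
      by (simp add: DERIV_deriv_iff_field_differentiable[symmetric] DERIV_def)
    from filterlim_compose[OF this h] show ?thesis
      by (simp add: o_def)
  qed
  ultimately show ?thesis
    by (rule borel_measurable_LIMSEQ_metric)
qed

lemma borel_measurable_higher_deriv:
  fixes F :: "'a \<Rightarrow> complex \<Rightarrow> complex"
  assumes "open D" "t \<in> D"
    and hol: "\<And>\<omega>. \<omega> \<in> space M \<Longrightarrow> F \<omega> holomorphic_on D"
    and meas: "\<And>t. t \<in> D \<Longrightarrow> (\<lambda>\<omega>. F \<omega> t) \<in> borel_measurable M"
  shows "(\<lambda>\<omega>. (deriv ^^ n) (F \<omega>) t) \<in> borel_measurable M"
  using \<open>t \<in> D\<close>
proof (induction n arbitrary: t)
  case 0
  then show ?case
    by (simp add: meas)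
next
  case (Suc n)
  have "(\<lambda>\<omega>. deriv ((deriv ^^ n) (F \<omega>)) t) \<in> borel_measurable M"
  proof (rule borel_measurable_deriv[OF \<open>open D\<close> Suc.prems])
    show "(deriv ^^ n) (F \<omega>) holomorphic_on D" if "\<omega> \<in> space M" for \<omega>
      using hol[OF that] \<open>open D\<close> by (rule holomorphic_higher_deriv)
  qed (rule Suc.IH)
  then show ?case
    by simp
qed

lemma borel_measurable_homogeneous_component:
  assumes "open U" "0 \<in> U" "random_holomorphic M U f"
  shows "(\<lambda>\<omega>. homogeneous_component (f \<omega>) k z) \<in> borel_measurable M"
proof -
  have "(\<lambda>\<omega>. (deriv ^^ k) (\<lambda>t. f \<omega> (t *s z)) 0) \<in> borel_measurable M"
  proof (rule borel_measurable_higher_deriv)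
    show "open {t. t *s z \<in> U}"
      using \<open>open U\<close> by (rule open_ray_preimage)
    show "0 \<in> {t. t *s z \<in> U}"
      using \<open>0 \<in> U\<close> by simp
    show "(\<lambda>t. f \<omega> (t *s z)) holomorphic_on {t. t *s z \<in> U}" if "\<omega> \<in> space M" for \<omega>
      using assms(3) that unfolding random_holomorphic_def by (blast intro: holomorphic_on_ray)
    show "(\<lambda>\<omega>. f \<omega> (t *s z)) \<in> borel_measurable M" if "t \<in> {t. t *s z \<in> U}" for t
      using assms(3) that unfolding random_holomorphic_def by blast
  qed
  then show ?thesis
    unfolding homogeneous_component_def by measurable
qed

theorem theorem4p5:
  fixes M :: "'a measure" and U :: "(complex ^ 'n) set"
    and f :: "'a \<Rightarrow> complex ^ 'n \<Rightarrow> complex"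
  assumes "open U"
    and "\<And>z l. z \<in> U \<Longrightarrow> norm l \<le> 1 \<Longrightarrow> l *s z \<in> U"
    and "random_holomorphic M U f"
  shows "\<exists>p :: nat \<Rightarrow> 'a \<Rightarrow> complex ^ 'n \<Rightarrow> complex.
           (\<forall>m. random_polynomial M (p m)) \<and>
           (\<forall>\<omega> \<in> space M. \<forall>K. compact K \<and> K \<subseteq> U \<longrightarrow>
               uniform_limit K (\<lambda>m. p m \<omega>) (f \<omega>) sequentially)"
proof (cases "U = {}")
  case True
  then show ?thesis
    by (intro exI[of _ "\<lambda>m \<omega> z. 0"])
      (auto simp: random_polynomial_def poly_fun_const uniform_limit_iff)
next
  case False
  then have "0 \<in> U"
    using assms(2)[of _ 0] by force
  have hol: "holo_on (f \<omega>) U" if "\<omega> \<in> space M" for \<omega>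
    using assms(3) that by (simp add: random_holomorphic_def)
  define p where "p m \<omega> z = (\<Sum>k<m. homogeneous_component (f \<omega>) k z)" for m \<omega> z
  have "random_polynomial M (p m)" for m
    unfolding random_polynomial_def p_def
    using hol poly_fun_homogeneous_component[OF _ assms(1) \<open>0 \<in> U\<close>]
      borel_measurable_homogeneous_component[OF assms(1) \<open>0 \<in> U\<close> assms(3)]
    by (auto intro!: poly_fun_sum borel_measurable_sum)
  moreover have "uniform_limit K (\<lambda>m. p m \<omega>) (f \<omega>) sequentially"
    if "\<omega> \<in> space M" "compact K" "K \<subseteq> U" for \<omega> K
    unfolding p_def using hol[OF that(1)] assms(1,2) that(2,3)
    by (rule uniform_limit_homogeneous_expansion)
  ultimately show ?thesis
    by blast
qed

end
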